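(* Let $G$ be a group, $A$ a semilattice of groups and $\Theta=(\theta,w)$ a twisted partial action of $G$ on $A$. Then $A*_\Theta G$, with $i(a)=a\delta_1$ and $j(a\delta_x)=x$, is an extension of $A$ by $G$. Moreover, the maps $\pi:A*_\Theta G\to E(A)*_\theta G$, $\pi(a\delta_x)=aa^{-1}\delta_x$, and $\kappa:E(A)*_\theta G\to G$, $\kappa(e\delta_x)=x$, are epimorphisms such that $A\overset{i}{\to}A*_\Theta G\overset{\pi}{\to}E(A)*_\theta G$ is an extension of $A$ by $E(A)*_\theta G$ and $j=\kappa\circ\pi$ (so $E(A)*_\theta G$ is, up to isomorphism, the $E$-unitary inverse semigroup associated with the extension $A*_\Theta G$ of $A$ by $G$).
   Context: A semilattice of groups is an inverse semigroup $A$ with central idempotents. A multiplier of a semigroup $T$ is a pair $(L,R)$ of maps $T\to T$ with $L(st)=L(s)t$, $R(st)=sR(t)$, $sL(t)=R(s)t$, written $ws=L(s)$, $sw=R(s)$; they form a monoid $\mathcal M(T)$ with unit group $\mathcal U(\mathcal M(T))$. A twisted partial action of $G$ on $A$ is $\Theta=(\theta,w)$ with isomorphisms $\theta_x:D_{x^{-1}}\to D_x$ between nonempty ideals and $w_{x,y}\in\mathcal U(\mathcal M(D_xD_{xy}))$ such that (i) $D_x^2=D_x$, $D_xD_y=D_yD_x$; (ii) $D_1=A$, $\theta_1=\mathrm{id}$; (iii) $\theta_x(D_{x^{-1}}D_y)=D_xD_{xy}$; (iv) $\theta_x\theta_y(s)=w_{x,y}\theta_{xy}(s)w_{x,y}^{-1}$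 for $s\in D_{y^{-1}}D_{y^{-1}x^{-1}}$; (v) $w_{1,x}=w_{x,1}$ = identity of $D_x$; (vi) $\theta_x(sw_{y,z})w_{x,yz}=\theta_x(s)w_{x,y}w_{xy,z}$ for $s\in D_{x^{-1}}D_yD_{yz}$. The crossed product $A*_\Theta G=\{a\delta_x: a\in D_x\}$ has product $a\delta_x\cdot b\delta_y=\theta_x(\theta_x^{-1}(a)b)w_{x,y}\delta_{xy}$. The maps $\theta_x$ restrict to isomorphisms $E(D_{x^{-1}})\to E(D_x)$ forming a partial action $\theta$ of $G$ on $E(A)$, and $E(A)*_\theta G=\{e\delta_x: e\in E(D_x)\}$ with $e\delta_x\cdot f\delta_y=\theta_x(\theta_x^{-1}(e)f)\delta_{xy}$. An extension of $A$ by a group $G$: inverse semigroup $U$, monomorphism $i:A\to U$, epimorphism $j:U\to G$ with $i(A)=j^{-1}(1)$. An extension of $A$ by an inverse semigroup $S$: inverse semigroup $U$, monomorphism $i:A\to U$, idempotent-separating epimorphism $\pi:U\to S$ with $i(A)=\pi^{-1}(E(S))$. *)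

theory Defs
  imports "HOL-Algebra.Coset"
begin

(* Inverse semigroups are represented as HOL-Algebra monoid records (the field one is ignored). *)

definition sgrp :: "('a,'b) monoid_scheme \<Rightarrow> bool" where
  "sgrp S \<longleftrightarrow> (\<forall>x\<in>carrier S. \<forall>y\<in>carrier S. x \<otimes>\<^bsub>S\<^esub> y \<in> carrier S) \<and>
     (\<forall>x\<in>carrier S. \<forall>y\<in>carrier S. \<forall>z\<in>carrier S.
        x \<otimes>\<^bsub>S\<^esub> y \<otimes>\<^bsub>S\<^esub> z = x \<otimes>\<^bsub>S\<^esub> (y \<otimes>\<^bsub>S\<^esub> z))"

definition inverse_semigroup :: "('a,'b) monoid_scheme \<Rightarrow> bool" where
  "inverse_semigroup S \<longleftrightarrow> sgrp S \<and>
     (\<forall>a\<in>carrier S. \<exists>!b. b \<in> carrier S \<and> a \<otimes>\<^bsub>S\<^esub> b \<otimes>\<^bsub>S\<^esub> a = a \<and> b \<otimes>\<^bsub>S\<^esub> a \<otimes>\<^bsub>S\<^esub> b = b)"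

definition sinv :: "('a,'b) monoid_scheme \<Rightarrow> 'a \<Rightarrow> 'a" where
  "sinv S a = (THE b. b \<in> carrier S \<and> a \<otimes>\<^bsub>S\<^esub> b \<otimes>\<^bsub>S\<^esub> a = a \<and> b \<otimes>\<^bsub>S\<^esub> a \<otimes>\<^bsub>S\<^esub> b = b)"

definition idems :: "('a,'b) monoid_scheme \<Rightarrow> 'a set" where
  "idems S = {e \<in> carrier S. e \<otimes>\<^bsub>S\<^esub> e = e}"

definition semilattice_of_groups :: "('a,'b) monoid_scheme \<Rightarrow> bool" where
  "semilattice_of_groups S \<longleftrightarrow> inverse_semigroup S \<and>
     (\<forall>e\<in>idems S. \<forall>a\<in>carrier S. e \<otimes>\<^bsub>S\<^esub> a = a \<otimes>\<^bsub>S\<^esub> e)"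

definition sg_ideal :: "('a,'b) monoid_scheme \<Rightarrow> 'a set \<Rightarrow> bool" where
  "sg_ideal S I \<longleftrightarrow> I \<noteq> {} \<and> I \<subseteq> carrier S \<and>
     (\<forall>s\<in>carrier S. \<forall>a\<in>I. s \<otimes>\<^bsub>S\<^esub> a \<in> I \<and> a \<otimes>\<^bsub>S\<^esub> s \<in> I)"

(* multiplier (L,R) of the subsemigroup T; w s = L s, s w = R s *)
definition multiplier :: "('a,'b) monoid_scheme \<Rightarrow> 'a set \<Rightarrow> ('a \<Rightarrow> 'a) \<times> ('a \<Rightarrow> 'a) \<Rightarrow> bool" where
  "multiplier S T w \<longleftrightarrow> fst w \<in> T \<rightarrow> T \<and> snd w \<in> T \<rightarrow> T \<and>
     (\<forall>s\<in>T. \<forall>t\<in>T. fst w (s \<otimes>\<^bsub>S\<^esub> t) = fst w s \<otimes>\<^bsub>S\<^esub> t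
                  \<and> snd w (s \<otimes>\<^bsub>S\<^esub> t) = s \<otimes>\<^bsub>S\<^esub> snd w t
                  \<and> s \<otimes>\<^bsub>S\<^esub> fst w t = snd w s \<otimes>\<^bsub>S\<^esub> t)"

(* Product in M(T): (w w') s = w (w' s), s (w w') = (s w) w'.  Identity: (id,id).
   w is a unit iff it has a two-sided inverse multiplier. *)
definition unit_multiplier :: "('a,'b) monoid_scheme \<Rightarrow> 'a set \<Rightarrow> ('a \<Rightarrow> 'a) \<times> ('a \<Rightarrow> 'a) \<Rightarrow> bool" where
  "unit_multiplier S T w \<longleftrightarrow> multiplier S T w \<and>
     (\<exists>w'. multiplier S T w' \<and>
        (\<forall>s\<in>T. fst w (fst w' s) = s \<and> fst w' (fst w s) = s \<and>
                snd w (snd w' s) = s \<and> snd w' (snd w s) = s))"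

(* right action of the inverse multiplier w^{-1} on T:  s w^{-1} *)
definition mult_rinv :: "'a set \<Rightarrow> ('a \<Rightarrow> 'a) \<times> ('a \<Rightarrow> 'a) \<Rightarrow> 'a \<Rightarrow> 'a" where
  "mult_rinv T w = inv_into T (snd w)"

definition twisted_partial_action ::
  "('g,'c) monoid_scheme \<Rightarrow> ('a,'b) monoid_scheme \<Rightarrow> ('g \<Rightarrow> 'a set) \<Rightarrow> ('g \<Rightarrow> 'a \<Rightarrow> 'a)
     \<Rightarrow> ('g \<Rightarrow> 'g \<Rightarrow> ('a \<Rightarrow> 'a) \<times> ('a \<Rightarrow> 'a)) \<Rightarrow> bool" where
  "twisted_partial_action G A D \<theta> w \<longleftrightarrow>
     (\<forall>x\<in>carrier G. sg_ideal A (D x)) \<and>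
     (\<forall>x\<in>carrier G. bij_betw (\<theta> x) (D (inv\<^bsub>G\<^esub> x)) (D x) \<and>
        (\<forall>a\<in>D (inv\<^bsub>G\<^esub> x). \<forall>b\<in>D (inv\<^bsub>G\<^esub> x). \<theta> x (a \<otimes>\<^bsub>A\<^esub> b) = \<theta> x a \<otimes>\<^bsub>A\<^esub> \<theta> x b)) \<and>
     (\<forall>x\<in>carrier G. \<forall>y\<in>carrier G. unit_multiplier A (D x <#>\<^bsub>A\<^esub> D (x \<otimes>\<^bsub>G\<^esub> y)) (w x y)) \<and>
     \<comment> \<open>(i)\<close>
     (\<forall>x\<in>carrier G. D x <#>\<^bsub>A\<^esub> D x = D x) \<and>
     (\<forall>x\<in>carrier G. \<forall>y\<in>carrier G. D x <#>\<^bsub>A\<^esub> D y = D y <#>\<^bsub>A\<^esub> D x) \<and>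
     \<comment> \<open>(ii)\<close>
     D \<one>\<^bsub>G\<^esub> = carrier A \<and> (\<forall>a\<in>carrier A. \<theta> \<one>\<^bsub>G\<^esub> a = a) \<and>
     \<comment> \<open>(iii)\<close>
     (\<forall>x\<in>carrier G. \<forall>y\<in>carrier G.
        \<theta> x ` (D (inv\<^bsub>G\<^esub> x) <#>\<^bsub>A\<^esub> D y) = D x <#>\<^bsub>A\<^esub> D (x \<otimes>\<^bsub>G\<^esub> y)) \<and>
     \<comment> \<open>(iv)\<close>
     (\<forall>x\<in>carrier G. \<forall>y\<in>carrier G.
        \<forall>s\<in>D (inv\<^bsub>G\<^esub> y) <#>\<^bsub>A\<^esub> D (inv\<^bsub>G\<^esub> y \<otimes>\<^bsub>G\<^esub> inv\<^bsub>G\<^esub> x).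
          \<theta> x (\<theta> y s) =
            mult_rinv (D x <#>\<^bsub>A\<^esub> D (x \<otimes>\<^bsub>G\<^esub> y)) (w x y) (fst (w x y) (\<theta> (x \<otimes>\<^bsub>G\<^esub> y) s))) \<and>
     \<comment> \<open>(v)\<close>
     (\<forall>x\<in>carrier G. \<forall>s\<in>D x.
        fst (w \<one>\<^bsub>G\<^esub> x) s = s \<and> snd (w \<one>\<^bsub>G\<^esub> x) s = s \<and>
        fst (w x \<one>\<^bsub>G\<^esub>) s = s \<and> snd (w x \<one>\<^bsub>G\<^esub>) s = s) \<and>
     \<comment> \<open>(vi)\<close>
     (\<forall>x\<in>carrier G. \<forall>y\<in>carrier G. \<forall>z\<in>carrier G.
        \<forall>s\<in>D (inv\<^bsub>G\<^esub> x) <#>\<^bsub>A\<^esub> D y <#>\<^bsub>A\<^esub> D (y \<otimes>\<^bsub>G\<^esub> z).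
          snd (w x (y \<otimes>\<^bsub>G\<^esub> z)) (\<theta> x (snd (w y z) s)) =
          snd (w (x \<otimes>\<^bsub>G\<^esub> y) z) (snd (w x y) (\<theta> x s)))"

(* crossed product A *_Theta G; the pair (a,x) stands for a delta_x *)
definition crossed_product ::
  "('g,'c) monoid_scheme \<Rightarrow> ('a,'b) monoid_scheme \<Rightarrow> ('g \<Rightarrow> 'a set) \<Rightarrow> ('g \<Rightarrow> 'a \<Rightarrow> 'a)
     \<Rightarrow> ('g \<Rightarrow> 'g \<Rightarrow> ('a \<Rightarrow> 'a) \<times> ('a \<Rightarrow> 'a)) \<Rightarrow> ('a \<times> 'g) monoid" where
  "crossed_product G A D \<theta> w =
     \<lparr> carrier = {(a, x). x \<in> carrier G \<and> a \<in> D x},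
       mult = (\<lambda>(a, x) (b, y).
          (snd (w x y) (\<theta> x (inv_into (D (inv\<^bsub>G\<^esub> x)) (\<theta> x) a \<otimes>\<^bsub>A\<^esub> b)), x \<otimes>\<^bsub>G\<^esub> y)),
       one = undefined \<rparr>"

definition idem_crossed_product ::
  "('g,'c) monoid_scheme \<Rightarrow> ('a,'b) monoid_scheme \<Rightarrow> ('g \<Rightarrow> 'a set) \<Rightarrow> ('g \<Rightarrow> 'a \<Rightarrow> 'a)
     \<Rightarrow> ('a \<times> 'g) monoid" where
  "idem_crossed_product G A D \<theta> =
     \<lparr> carrier = {(e, x). x \<in> carrier G \<and> e \<in> D x \<inter> idems A},
       mult = (\<lambda>(e, x) (f, y).
          (\<theta> x (inv_into (D (inv\<^bsub>G\<^esub> x)) (\<theta> x) e \<otimes>\<^bsub>A\<^esub> f), x \<otimes>\<^bsub>G\<^esub> y)),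
       one = undefined \<rparr>"

definition monomorphism where
  "monomorphism S T h \<longleftrightarrow> h \<in> hom S T \<and> inj_on h (carrier S)"

definition epimorphism where
  "epimorphism S T h \<longleftrightarrow> h \<in> hom S T \<and> h ` carrier S = carrier T"

definition group_extension ::
  "('a,'b) monoid_scheme \<Rightarrow> ('u,'d) monoid_scheme \<Rightarrow> ('g,'c) monoid_scheme
     \<Rightarrow> ('a \<Rightarrow> 'u) \<Rightarrow> ('u \<Rightarrow> 'g) \<Rightarrow> bool" where
  "group_extension A U G i j \<longleftrightarrow> inverse_semigroup U \<and> group G \<and>
     monomorphism A U i \<and> epimorphism U G j \<and>
     i ` carrier A = {u \<in> carrier U. j u = \<one>\<^bsub>G\<^esub>}"

definition semigroup_extension ::
  "('a,'b) monoid_scheme \<Rightarrow> ('u,'d) monoid_scheme \<Rightarrow> ('s,'e) monoid_scheme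
     \<Rightarrow> ('a \<Rightarrow> 'u) \<Rightarrow> ('u \<Rightarrow> 's) \<Rightarrow> bool" where
  "semigroup_extension A U S i p \<longleftrightarrow> inverse_semigroup U \<and> inverse_semigroup S \<and>
     monomorphism A U i \<and> epimorphism U S p \<and> inj_on p (idems U) \<and>
     i ` carrier A = {u \<in> carrier U. p u \<in> idems S}"

end

theory Submission
  imports Defs
begin

text \<open>Both bracketings of \<open>a\<delta>\<^sub>x \<cdot> b\<delta>\<^sub>y \<cdot> c\<delta>\<^sub>z\<close> reduce to
  \<open>\<theta>\<^sub>x(a' \<theta>\<^sub>y(b' c)) w\<^sub>x\<^sub>,\<^sub>y w\<^sub>x\<^sub>y\<^sub>,\<^sub>z\<close> with \<open>a' = \<theta>\<^sub>x\<^sup>-\<^sup>1(a)\<close>, \<open>b' = \<theta>\<^sub>y\<^sup>-\<^sup>1(b)\<close>: one side by the cocycle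
  identity (vi), the other by (iv), which moves \<open>w\<^sub>x\<^sub>,\<^sub>y\<close> past \<open>\<theta>\<^sub>x\<^sub>y\<close>, together with the centrality
  of idempotents in \<open>A\<close>. Every \<open>a\<delta>\<^sub>x\<close> has an explicit quasi-inverse in \<open>A *\<^sub>\<Theta> G\<close>, and the
  idempotents are exactly the \<open>e\<delta>\<^sub>1\<close> with \<open>e \<in> E(A)\<close>, so they commute and \<open>A *\<^sub>\<Theta> G\<close> is inverse.
  Twisting by a unit multiplier does not change \<open>a a\<^sup>-\<^sup>1\<close>, which makes \<open>\<pi>\<close> multiplicative; since
  \<open>E(A) *\<^sub>\<theta> G\<close> is the set of fixed points of \<open>\<pi>\<close>, it is an epimorphic image of \<open>A *\<^sub>\<Theta> G\<close> and
  hence regular, and its idempotents again lie over \<open>1\<close>. The extension properties follow from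
  \<open>D\<^sub>1 = A\<close>.\<close>

definition regular_sgrp :: "('a,'b) monoid_scheme \<Rightarrow> bool" where
  "regular_sgrp S \<longleftrightarrow> sgrp S \<and> (\<forall>a\<in>carrier S. \<exists>b\<in>carrier S. a \<otimes>\<^bsub>S\<^esub> b \<otimes>\<^bsub>S\<^esub> a = a)"

lemma sgrp_closed:
  fixes S (structure)
  shows "sgrp S \<Longrightarrow> x \<in> carrier S \<Longrightarrow> y \<in> carrier S \<Longrightarrow> x \<otimes> y \<in> carrier S"
  unfolding sgrp_def by blast

lemma sgrp_assoc:
  fixes S (structure)
  shows "sgrp S \<Longrightarrow> x \<in> carrier S \<Longrightarrow> y \<in> carrier S \<Longrightarrow> z \<in> carrier S \<Longrightarrow>
    x \<otimes> y \<otimes> z = x \<otimes> (y \<otimes> z)"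
  unfolding sgrp_def by blast

lemma regular_sgrp_inverse_exists:
  fixes S (structure)
  assumes "regular_sgrp S" and a: "a \<in> carrier S"
  shows "\<exists>b\<in>carrier S. a \<otimes> b \<otimes> a = a \<and> b \<otimes> a \<otimes> b = b"
proof -
  have S: "sgrp S" using assms unfolding regular_sgrp_def by blast
  note cl = sgrp_closed[OF S] and as = sgrp_assoc[OF S]
  obtain c where c: "c \<in> carrier S" "a \<otimes> c \<otimes> a = a"
    using assms unfolding regular_sgrp_def by blast
  have "a \<otimes> (c \<otimes> a \<otimes> c) \<otimes> a = (a \<otimes> c \<otimes> a) \<otimes> c \<otimes> a"
    using a c(1) by (simp add: as cl)
  moreover have "c \<otimes> a \<otimes> c \<otimes> a \<otimes> (c \<otimes> a \<otimes> c) = c \<otimes> (a \<otimes> c \<otimes> a) \<otimes> (c \<otimes> a) \<otimes> c"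
    using a c(1) by (simp add: as cl)
  moreover have "c \<otimes> (a \<otimes> c \<otimes> a) \<otimes> c = c \<otimes> a \<otimes> c"
    using c by simp
  ultimately show ?thesis
    using a c by (intro bexI[of _ "c \<otimes> a \<otimes> c"]) (simp_all add: as cl)
qed

lemma inverse_unique_if_idems_commute:
  fixes S (structure)
  assumes S: "sgrp S"
    and comm: "\<And>e f. e \<in> idems S \<Longrightarrow> f \<in> idems S \<Longrightarrow> e \<otimes> f = f \<otimes> e"
    and a: "a \<in> carrier S" and b: "b \<in> carrier S" and c: "c \<in> carrier S"
    and b_inv: "a \<otimes> b \<otimes> a = a" "b \<otimes> a \<otimes> b = b"
    and c_inv: "a \<otimes> c \<otimes> a = a" "c \<otimes> a \<otimes> c = c"
  shows "b = c"
proof -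
  note cl = sgrp_closed[OF S] and as = sgrp_assoc[OF S]
  have idem: "y \<otimes> a \<in> idems S" "a \<otimes> y \<in> idems S"
    if "y \<in> carrier S" "a \<otimes> y \<otimes> a = a" for y
    using that a by (simp_all add: idems_def cl, metis as cl)+
  have "b = (b \<otimes> a) \<otimes> (c \<otimes> a) \<otimes> b"
    using a b c b_inv c_inv by (simp add: as cl)
  also have "\<dots> = (c \<otimes> a) \<otimes> (b \<otimes> a) \<otimes> b"
    using comm[OF idem(1)[OF b b_inv(1)] idem(1)[OF c c_inv(1)]] by simp
  also have "\<dots> = (c \<otimes> a \<otimes> c) \<otimes> a \<otimes> b"
    using a b c b_inv c_inv by (simp add: as cl)
  also have "\<dots> = c \<otimes> ((a \<otimes> c) \<otimes> (a \<otimes> b))"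
    using a b c by (simp add: as cl)
  also have "\<dots> = c \<otimes> ((a \<otimes> b) \<otimes> (a \<otimes> c))"
    using comm[OF idem(2)[OF b b_inv(1)] idem(2)[OF c c_inv(1)]] by simp
  also have "\<dots> = c \<otimes> (a \<otimes> b \<otimes> a) \<otimes> c"
    using a b c by (simp add: as cl)
  also have "\<dots> = c"
    using b_inv c_inv by simp
  finally show ?thesis .
qed

lemma inverse_semigroupI:
  fixes S (structure)
  assumes reg: "regular_sgrp S"
    and comm: "\<And>e f. e \<in> idems S \<Longrightarrow> f \<in> idems S \<Longrightarrow> e \<otimes> f = f \<otimes> e"
  shows "inverse_semigroup S"
  unfolding inverse_semigroup_def
proof (intro conjI ballI)
  show S: "sgrp S" using reg unfolding regular_sgrp_def by blast
  fix a assume "a \<in> carrier S"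
  show "\<exists>!b. b \<in> carrier S \<and> a \<otimes> b \<otimes> a = a \<and> b \<otimes> a \<otimes> b = b"
  proof (rule ex_ex1I)
    show "\<exists>b. b \<in> carrier S \<and> a \<otimes> b \<otimes> a = a \<and> b \<otimes> a \<otimes> b = b"
      using regular_sgrp_inverse_exists[OF reg \<open>a \<in> carrier S\<close>] by blast
  next
    fix b c
    assume "b \<in> carrier S \<and> a \<otimes> b \<otimes> a = a \<and> b \<otimes> a \<otimes> b = b"
      and "c \<in> carrier S \<and> a \<otimes> c \<otimes> a = a \<and> c \<otimes> a \<otimes> c = c"
    then show "b = c"
      using inverse_unique_if_idems_commute[OF S comm \<open>a \<in> carrier S\<close>, of b c] by blast
  qed
qed

lemma epimorphism_regular_sgrp:
  assumes "regular_sgrp U" and h: "epimorphism U S h"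
  shows "regular_sgrp S"
proof -
  have U: "sgrp U" and U_reg: "\<forall>a\<in>carrier U. \<exists>b\<in>carrier U. a \<otimes>\<^bsub>U\<^esub> b \<otimes>\<^bsub>U\<^esub> a = a"
    using assms unfolding regular_sgrp_def by blast+
  have hom: "\<And>u v. u \<in> carrier U \<Longrightarrow> v \<in> carrier U \<Longrightarrow> h (u \<otimes>\<^bsub>U\<^esub> v) = h u \<otimes>\<^bsub>S\<^esub> h v"
    and onto: "h ` carrier U = carrier S"
    using h unfolding epimorphism_def hom_def by blast+
  note cl = sgrp_closed[OF U] and as = sgrp_assoc[OF U]
  have lift: "\<exists>u\<in>carrier U. x = h u" if "x \<in> carrier S" for x
    using that unfolding onto[symmetric] by blast
  have "sgrp S"
    unfolding sgrp_def
  proof (intro conjI ballI)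
    fix x y assume "x \<in> carrier S" "y \<in> carrier S"
    then obtain u v where "u \<in> carrier U" "v \<in> carrier U" "x = h u" "y = h v"
      using lift by blast
    then show "x \<otimes>\<^bsub>S\<^esub> y \<in> carrier S"
      using hom[of u v] cl[of u v] onto by force
  next
    fix x y z assume "x \<in> carrier S" "y \<in> carrier S" "z \<in> carrier S"
    then obtain u v t where "u \<in> carrier U" "v \<in> carrier U" "t \<in> carrier U"
      and "x = h u" "y = h v" "z = h t"
      using lift by metis
    then show "x \<otimes>\<^bsub>S\<^esub> y \<otimes>\<^bsub>S\<^esub> z = x \<otimes>\<^bsub>S\<^esub> (y \<otimes>\<^bsub>S\<^esub> z)"
      by (simp flip: hom add: cl as)
  qed
  moreover have "\<exists>b\<in>carrier S. s \<otimes>\<^bsub>S\<^esub> b \<otimes>\<^bsub>S\<^esub> s = s" if "s \<in> carrier S" for s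
  proof -
    from lift[OF that] obtain u where u: "u \<in> carrier U" "s = h u" by blast
    obtain b where b: "b \<in> carrier U" "u \<otimes>\<^bsub>U\<^esub> b \<otimes>\<^bsub>U\<^esub> u = u" using U_reg u by blast
    have "h u \<otimes>\<^bsub>S\<^esub> h b \<otimes>\<^bsub>S\<^esub> h u = h u"
      using u b by (simp flip: hom add: cl)
    then show ?thesis using u b onto by blast
  qed
  ultimately show ?thesis unfolding regular_sgrp_def by blast
qed

locale clifford_semigroup =
  fixes A (structure)
  assumes semilattice_of_groups: "semilattice_of_groups A"
begin

lemma mult_closed [intro, simp]: "a \<in> carrier A \<Longrightarrow> b \<in> carrier A \<Longrightarrow> a \<otimes> b \<in> carrier A"
  using semilattice_of_groups
  unfolding semilattice_of_groups_def inverse_semigroup_def sgrp_def by blast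

lemma mult_assoc:
  "a \<in> carrier A \<Longrightarrow> b \<in> carrier A \<Longrightarrow> c \<in> carrier A \<Longrightarrow> a \<otimes> b \<otimes> c = a \<otimes> (b \<otimes> c)"
  using semilattice_of_groups
  unfolding semilattice_of_groups_def inverse_semigroup_def sgrp_def by blast

lemma idem_central: "e \<in> idems A \<Longrightarrow> a \<in> carrier A \<Longrightarrow> e \<otimes> a = a \<otimes> e"
  using semilattice_of_groups unfolding semilattice_of_groups_def by blast

lemma sinv_unique_ex:
  "a \<in> carrier A \<Longrightarrow> \<exists>!b. b \<in> carrier A \<and> a \<otimes> b \<otimes> a = a \<and> b \<otimes> a \<otimes> b = b"
  using semilattice_of_groups unfolding semilattice_of_groups_def inverse_semigroup_def by blast

lemma sinv_inverse:
  assumes "a \<in> carrier A"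
  shows "sinv A a \<in> carrier A" "a \<otimes> sinv A a \<otimes> a = a" "sinv A a \<otimes> a \<otimes> sinv A a = sinv A a"
  using theI'[OF sinv_unique_ex[OF assms]] unfolding sinv_def by blast+

lemmas sinv_closed [intro, simp] = sinv_inverse(1)

lemma sinv_eqI:
  "a \<in> carrier A \<Longrightarrow> b \<in> carrier A \<Longrightarrow> a \<otimes> b \<otimes> a = a \<Longrightarrow> b \<otimes> a \<otimes> b = b \<Longrightarrow> sinv A a = b"
  unfolding sinv_def by (rule the1_equality[OF sinv_unique_ex]) auto

lemma idems_carrier: "e \<in> idems A \<Longrightarrow> e \<in> carrier A"
  unfolding idems_def by blast

lemma sinv_cancel:
  assumes "a \<in> carrier A"
  shows "a \<otimes> (sinv A a \<otimes> a) = a" "sinv A a \<otimes> (a \<otimes> sinv A a) = sinv A a"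
    and "x \<in> carrier A \<Longrightarrow> a \<otimes> (sinv A a \<otimes> (a \<otimes> x)) = a \<otimes> x"
    and "x \<in> carrier A \<Longrightarrow> sinv A a \<otimes> (a \<otimes> (sinv A a \<otimes> x)) = sinv A a \<otimes> x"
  using assms sinv_inverse[OF assms] by (simp_all flip: mult_assoc)

lemma mult_sinv_idem: "a \<in> carrier A \<Longrightarrow> a \<otimes> sinv A a \<in> idems A"
  unfolding idems_def by (simp add: mult_assoc sinv_cancel)

lemma sinv_mult_idem: "a \<in> carrier A \<Longrightarrow> sinv A a \<otimes> a \<in> idems A"
  unfolding idems_def by (simp add: mult_assoc sinv_cancel)

lemma sinv_idem: "e \<in> idems A \<Longrightarrow> sinv A e = e"
  by (rule sinv_eqI) (auto simp: idems_def)

lemma sinv_mult: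
  assumes a: "a \<in> carrier A" and b: "b \<in> carrier A"
  shows "sinv A (a \<otimes> b) = sinv A b \<otimes> sinv A a"
proof (rule sinv_eqI)
  have swap: "b \<otimes> sinv A b \<otimes> (sinv A a \<otimes> a) = sinv A a \<otimes> a \<otimes> (b \<otimes> sinv A b)"
    using idem_central[OF mult_sinv_idem[OF b]] sinv_mult_idem[OF a] by (simp add: idems_def)
  have "a \<otimes> b \<otimes> (sinv A b \<otimes> sinv A a) \<otimes> (a \<otimes> b) = a \<otimes> (b \<otimes> sinv A b \<otimes> (sinv A a \<otimes> a)) \<otimes> b"
    using a b by (simp add: mult_assoc)
  also have "\<dots> = (a \<otimes> sinv A a \<otimes> a) \<otimes> (b \<otimes> sinv A b \<otimes> b)"
    using a b swap by (simp add: mult_assoc)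
  finally show "a \<otimes> b \<otimes> (sinv A b \<otimes> sinv A a) \<otimes> (a \<otimes> b) = a \<otimes> b"
    using a b by (simp add: sinv_inverse)
  have "sinv A b \<otimes> sinv A a \<otimes> (a \<otimes> b) \<otimes> (sinv A b \<otimes> sinv A a)
      = sinv A b \<otimes> (sinv A a \<otimes> a \<otimes> (b \<otimes> sinv A b)) \<otimes> sinv A a"
    using a b by (simp add: mult_assoc)
  also have "\<dots> = (sinv A b \<otimes> b \<otimes> sinv A b) \<otimes> (sinv A a \<otimes> a \<otimes> sinv A a)"
    using a b swap[symmetric] by (simp add: mult_assoc)
  finally show "sinv A b \<otimes> sinv A a \<otimes> (a \<otimes> b) \<otimes> (sinv A b \<otimes> sinv A a) = sinv A b \<otimes> sinv A a"
    using a b by (simp add: sinv_inverse)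
qed (use a b in auto)

lemma mult_sinv_mult:
  "a \<in> carrier A \<Longrightarrow> b \<in> carrier A \<Longrightarrow>
    a \<otimes> b \<otimes> sinv A (a \<otimes> b) = a \<otimes> sinv A a \<otimes> (b \<otimes> sinv A b)"
proof -
  assume a: "a \<in> carrier A" and b: "b \<in> carrier A"
  have "a \<otimes> b \<otimes> sinv A (a \<otimes> b) = a \<otimes> (b \<otimes> sinv A b \<otimes> sinv A a)"
    using a b by (simp add: sinv_mult mult_assoc)
  also have "\<dots> = a \<otimes> (sinv A a \<otimes> (b \<otimes> sinv A b))"
    using idem_central[OF mult_sinv_idem[OF b], of "sinv A a"] a by simp
  finally show ?thesis
    using a b by (simp add: mult_assoc)
qed

lemma sg_ideal_subset: "sg_ideal A I \<Longrightarrow> I \<subseteq> carrier A"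
  unfolding sg_ideal_def by blast

lemma sg_ideal_mult_left: "sg_ideal A I \<Longrightarrow> s \<in> carrier A \<Longrightarrow> a \<in> I \<Longrightarrow> s \<otimes> a \<in> I"
  unfolding sg_ideal_def by blast

lemma sg_ideal_mult_right: "sg_ideal A I \<Longrightarrow> s \<in> carrier A \<Longrightarrow> a \<in> I \<Longrightarrow> a \<otimes> s \<in> I"
  unfolding sg_ideal_def by blast

lemma sg_ideal_sinv: "sg_ideal A I \<Longrightarrow> a \<in> I \<Longrightarrow> sinv A a \<in> I"
  by (metis sg_ideal_mult_left sg_ideal_mult_right sg_ideal_subset sinv_inverse(1,3) subsetD)

lemma sg_ideal_Int: "sg_ideal A I \<Longrightarrow> sg_ideal A J \<Longrightarrow> sg_ideal A (I \<inter> J)"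
proof -
  assume I: "sg_ideal A I" and J: "sg_ideal A J"
  obtain a b where "a \<in> I" "b \<in> J" using I J unfolding sg_ideal_def by blast
  then have "a \<otimes> b \<in> I \<inter> J"
    using I J sg_ideal_mult_left sg_ideal_mult_right sg_ideal_subset by blast
  then show ?thesis using I J unfolding sg_ideal_def by blast
qed

lemma set_mult_sg_ideal: "sg_ideal A I \<Longrightarrow> sg_ideal A J \<Longrightarrow> I <#> J = I \<inter> J"
proof
  assume I: "sg_ideal A I" and J: "sg_ideal A J"
  show "I <#> J \<subseteq> I \<inter> J" unfolding set_mult_def
    using I J sg_ideal_mult_left sg_ideal_mult_right sg_ideal_subset by blast
  show "I \<inter> J \<subseteq> I <#> J"
  proof
    fix s assume s: "s \<in> I \<inter> J"
    then have "s \<in> carrier A" using I sg_ideal_subset by blast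
    then have "s = (s \<otimes> sinv A s) \<otimes> s" and "s \<otimes> sinv A s \<in> I"
      using s I sinv_inverse sg_ideal_mult_right by auto
    then show "s \<in> I <#> J" unfolding set_mult_def using s by blast
  qed
qed

context
  fixes T and w
  assumes T: "sg_ideal A T" and w: "unit_multiplier A T w"
begin

lemma multiplier_carrier: "t \<in> T \<Longrightarrow> t \<in> carrier A"
  using sg_ideal_subset T by blast

lemma multiplier_closed: "t \<in> T \<Longrightarrow> fst w t \<in> T" "t \<in> T \<Longrightarrow> snd w t \<in> T"
  using w unfolding unit_multiplier_def multiplier_def by blast+

lemma multiplier_mult:
  "s \<in> T \<Longrightarrow> t \<in> T \<Longrightarrow> fst w (s \<otimes> t) = fst w s \<otimes> t"
  "s \<in> T \<Longrightarrow> t \<in> T \<Longrightarrow> snd w (s \<otimes> t) = s \<otimes> snd w t"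
  "s \<in> T \<Longrightarrow> t \<in> T \<Longrightarrow> s \<otimes> fst w t = snd w s \<otimes> t"
  using w unfolding unit_multiplier_def multiplier_def by blast+

lemma multiplier_bij: "bij_betw (snd w) T T"
proof -
  obtain w' where "multiplier A T w'" and inv: "\<forall>s\<in>T. snd w (snd w' s) = s \<and> snd w' (snd w s) = s"
    using w unfolding unit_multiplier_def by blast
  then have "snd w' ` T \<subseteq> T" unfolding multiplier_def by blast
  then show ?thesis
    using inv multiplier_closed(2) by (intro bij_betw_byWitness[of _ "snd w'"]) auto
qed

lemma multiplier_rinv:
  "t \<in> T \<Longrightarrow> mult_rinv T w t \<in> T"
  "t \<in> T \<Longrightarrow> snd w (mult_rinv T w t) = t"
  "t \<in> T \<Longrightarrow> mult_rinv T w (snd w t) = t"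
  using multiplier_bij unfolding mult_rinv_def
  by (auto simp: bij_betw_inv_into_right bij_betw_inv_into_left bij_betw_apply[OF bij_betw_inv_into])

text \<open>Although \<open>w\<close> is only a multiplier of \<open>T\<close>, its right action commutes with left multiplication
  by all of \<open>A\<close>, because \<open>t = (t \<otimes> sinv A t) \<otimes> t\<close> with \<open>t \<otimes> sinv A t \<in> T\<close>.\<close>

lemma multiplier_mult_left:
  assumes a: "a \<in> carrier A" and t: "t \<in> T"
  shows "snd w (a \<otimes> t) = a \<otimes> snd w t"
proof -
  have tA: "t \<in> carrier A" using multiplier_carrier t .
  have e: "t \<otimes> sinv A t \<in> T" using sg_ideal_mult_right[OF T] t tA by simp
  have ae: "a \<otimes> (t \<otimes> sinv A t) \<in> T" using sg_ideal_mult_left[OF T] e a by simp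
  have "snd w (a \<otimes> t) = snd w (a \<otimes> (t \<otimes> sinv A t) \<otimes> t)"
    using a tA by (simp add: mult_assoc sinv_cancel)
  also have "\<dots> = a \<otimes> (t \<otimes> sinv A t \<otimes> snd w t)"
    using multiplier_mult(2)[OF ae t] a tA multiplier_carrier[OF multiplier_closed(2)[OF t]]
    by (simp add: mult_assoc)
  also have "\<dots> = a \<otimes> snd w t"
    using multiplier_mult(2)[OF e t] tA by (simp add: sinv_inverse(2))
  finally show ?thesis .
qed

lemma multiplier_rinv_mult_left:
  assumes a: "a \<in> carrier A" and t: "t \<in> T"
  shows "mult_rinv T w (a \<otimes> t) = a \<otimes> mult_rinv T w t"
proof -
  have "a \<otimes> mult_rinv T w t \<in> T"
    using sg_ideal_mult_left[OF T a] multiplier_rinv(1)[OF t] .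
  moreover have "snd w (a \<otimes> mult_rinv T w t) = a \<otimes> t"
    using multiplier_mult_left[OF a] multiplier_rinv(1,2)[OF t] by simp
  ultimately show ?thesis
    using multiplier_rinv(3) by metis
qed

lemma multiplier_mult_sinv:
  assumes t: "t \<in> T"
  shows "snd w t \<otimes> sinv A (snd w t) = t \<otimes> sinv A t"
proof -
  define r where "r = snd w t"
  have r: "r \<in> T" using multiplier_closed(2) t r_def by simp
  have tA: "t \<in> carrier A" and rA: "r \<in> carrier A" using multiplier_carrier t r by auto
  define e where "e = t \<otimes> sinv A t"
  define f where "f = r \<otimes> sinv A r"
  have e: "e \<in> idems A" and f: "f \<in> idems A"
    unfolding e_def f_def using tA rA by (simp_all add: mult_sinv_idem)
  have "r = e \<otimes> r"
    unfolding r_def e_def using multiplier_mult_left[OF _ t, of "t \<otimes> sinv A t"] tA by (simp add: sinv_inverse(2))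
  then have ef: "e \<otimes> f = f"
    unfolding f_def using idems_carrier[OF e] rA by (simp flip: mult_assoc)
  have "t = mult_rinv T w (f \<otimes> r)"
    unfolding r_def f_def using multiplier_rinv(3)[OF t] rA by (simp add: sinv_inverse(2) r_def)
  then have "t = f \<otimes> t"
    using multiplier_rinv_mult_left f r multiplier_rinv(3)[OF t] unfolding r_def idems_def by simp
  then have fe: "f \<otimes> e = e"
    unfolding e_def using idems_carrier[OF f] tA by (simp flip: mult_assoc)
  show ?thesis
    using ef fe idem_central[OF e, of f] f unfolding e_def f_def r_def idems_def by simp
qed

end

end

locale twisted_action = clifford_semigroup +
  fixes G :: "('g,'c) monoid_scheme" and D :: "'g \<Rightarrow> 'a set" and \<theta> :: "'g \<Rightarrow> 'a \<Rightarrow> 'a"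
    and w :: "'g \<Rightarrow> 'g \<Rightarrow> ('a \<Rightarrow> 'a) \<times> ('a \<Rightarrow> 'a)"
  assumes group: "group G" and twisted: "twisted_partial_action G A D \<theta> w"

sublocale twisted_action \<subseteq> G: group G by (rule group)

context twisted_action
begin

abbreviation \<theta>' :: "'g \<Rightarrow> 'a \<Rightarrow> 'a" where "\<theta>' x \<equiv> inv_into (D (inv\<^bsub>G\<^esub> x)) (\<theta> x)"
abbreviation L :: "'g \<Rightarrow> 'g \<Rightarrow> 'a \<Rightarrow> 'a" where "L x y \<equiv> fst (w x y)"
abbreviation R :: "'g \<Rightarrow> 'g \<Rightarrow> 'a \<Rightarrow> 'a" where "R x y \<equiv> snd (w x y)"

lemma D_sg_ideal: "x \<in> carrier G \<Longrightarrow> sg_ideal A (D x)"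
  using twisted unfolding twisted_partial_action_def by (elim conjE) blast

lemma D_carrier: "x \<in> carrier G \<Longrightarrow> a \<in> D x \<Longrightarrow> a \<in> carrier A"
  using D_sg_ideal sg_ideal_subset by blast

lemma D_mult_left: "x \<in> carrier G \<Longrightarrow> s \<in> carrier A \<Longrightarrow> a \<in> D x \<Longrightarrow> s \<otimes> a \<in> D x"
  using D_sg_ideal sg_ideal_mult_left by blast

lemma D_mult_right: "x \<in> carrier G \<Longrightarrow> s \<in> carrier A \<Longrightarrow> a \<in> D x \<Longrightarrow> a \<otimes> s \<in> D x"
  using D_sg_ideal sg_ideal_mult_right by blast

lemma D_sinv: "x \<in> carrier G \<Longrightarrow> a \<in> D x \<Longrightarrow> sinv A a \<in> D x"
  using D_sg_ideal sg_ideal_sinv by blast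

lemma D_nonempty: "x \<in> carrier G \<Longrightarrow> D x \<noteq> {}"
  using D_sg_ideal unfolding sg_ideal_def by blast

lemma D_one: "D \<one>\<^bsub>G\<^esub> = carrier A"
  using twisted unfolding twisted_partial_action_def by (elim conjE) blast

lemma D_set_mult: "x \<in> carrier G \<Longrightarrow> y \<in> carrier G \<Longrightarrow> D x <#> D y = D x \<inter> D y"
  using set_mult_sg_ideal D_sg_ideal by blast

lemma twist_sg_ideal: "x \<in> carrier G \<Longrightarrow> y \<in> carrier G \<Longrightarrow> sg_ideal A (D x \<inter> D y)"
  using D_sg_ideal sg_ideal_Int by blast

lemma twist_unit_multiplier:
  "x \<in> carrier G \<Longrightarrow> y \<in> carrier G \<Longrightarrow> unit_multiplier A (D x \<inter> D (x \<otimes>\<^bsub>G\<^esub> y)) (w x y)"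
  using twisted D_set_mult unfolding twisted_partial_action_def by (metis G.m_closed)

lemma theta_bij: "x \<in> carrier G \<Longrightarrow> bij_betw (\<theta> x) (D (inv\<^bsub>G\<^esub> x)) (D x)"
  using twisted unfolding twisted_partial_action_def by (elim conjE) blast

lemma theta_mult:
  "x \<in> carrier G \<Longrightarrow> a \<in> D (inv\<^bsub>G\<^esub> x) \<Longrightarrow> b \<in> D (inv\<^bsub>G\<^esub> x) \<Longrightarrow> \<theta> x (a \<otimes> b) = \<theta> x a \<otimes> \<theta> x b"
  using twisted unfolding twisted_partial_action_def by (elim conjE) blast

lemma theta_one: "a \<in> carrier A \<Longrightarrow> \<theta> \<one>\<^bsub>G\<^esub> a = a"
  using twisted unfolding twisted_partial_action_def by (elim conjE) blast

lemma theta_image_Int: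
  "x \<in> carrier G \<Longrightarrow> y \<in> carrier G \<Longrightarrow> \<theta> x ` (D (inv\<^bsub>G\<^esub> x) \<inter> D y) = D x \<inter> D (x \<otimes>\<^bsub>G\<^esub> y)"
  using twisted D_set_mult unfolding twisted_partial_action_def by (metis G.inv_closed G.m_closed)

lemma theta_theta:
  assumes "x \<in> carrier G" "y \<in> carrier G"
    and "s \<in> D (inv\<^bsub>G\<^esub> y) \<inter> D (inv\<^bsub>G\<^esub> y \<otimes>\<^bsub>G\<^esub> inv\<^bsub>G\<^esub> x)"
  shows "\<theta> x (\<theta> y s) = mult_rinv (D x \<inter> D (x \<otimes>\<^bsub>G\<^esub> y)) (w x y) (L x y (\<theta> (x \<otimes>\<^bsub>G\<^esub> y) s))"
proof -
  have "s \<in> D (inv\<^bsub>G\<^esub> y) <#> D (inv\<^bsub>G\<^esub> y \<otimes>\<^bsub>G\<^esub> inv\<^bsub>G\<^esub> x)"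
    using assms D_set_mult by simp
  then show ?thesis
    using twisted assms D_set_mult unfolding twisted_partial_action_def by simp
qed

lemma twist_one_left: "x \<in> carrier G \<Longrightarrow> s \<in> D x \<Longrightarrow> R \<one>\<^bsub>G\<^esub> x s = s"
  using twisted unfolding twisted_partial_action_def by (elim conjE) auto

lemma twist_cocycle:
  assumes "x \<in> carrier G" "y \<in> carrier G" "z \<in> carrier G"
    and "s \<in> D (inv\<^bsub>G\<^esub> x) \<inter> D y \<inter> D (y \<otimes>\<^bsub>G\<^esub> z)"
  shows "R x (y \<otimes>\<^bsub>G\<^esub> z) (\<theta> x (R y z s)) = R (x \<otimes>\<^bsub>G\<^esub> y) z (R x y (\<theta> x s))"
proof -
  have "s \<in> D (inv\<^bsub>G\<^esub> x) <#> D y <#> D (y \<otimes>\<^bsub>G\<^esub> z)"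
    using assms D_set_mult set_mult_sg_ideal[OF twist_sg_ideal D_sg_ideal] by simp
  then show ?thesis
    using twisted assms unfolding twisted_partial_action_def by blast
qed

lemma theta_closed: "x \<in> carrier G \<Longrightarrow> s \<in> D (inv\<^bsub>G\<^esub> x) \<Longrightarrow> \<theta> x s \<in> D x"
  using theta_bij bij_betwE by blast

lemma theta_inv_closed: "x \<in> carrier G \<Longrightarrow> a \<in> D x \<Longrightarrow> \<theta>' x a \<in> D (inv\<^bsub>G\<^esub> x)"
  using theta_bij by (metis bij_betw_def inv_into_into)

lemma theta_theta_inv: "x \<in> carrier G \<Longrightarrow> a \<in> D x \<Longrightarrow> \<theta> x (\<theta>' x a) = a"
  using theta_bij by (metis bij_betw_def f_inv_into_f)

lemma theta_inv_theta: "x \<in> carrier G \<Longrightarrow> s \<in> D (inv\<^bsub>G\<^esub> x) \<Longrightarrow> \<theta>' x (\<theta> x s) = s"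
  using theta_bij by (metis bij_betw_def inv_into_f_f)

lemma theta_inv_one: "a \<in> carrier A \<Longrightarrow> inv_into (carrier A) (\<theta> \<one>\<^bsub>G\<^esub>) a = a"
  using theta_inv_theta[of "\<one>\<^bsub>G\<^esub>" a] theta_one D_one by simp

lemma theta_sinv:
  assumes x: "x \<in> carrier G" and s: "s \<in> D (inv\<^bsub>G\<^esub> x)"
  shows "\<theta> x (sinv A s) = sinv A (\<theta> x s)"
proof -
  have sA: "s \<in> carrier A" using D_carrier s x by blast
  have s': "sinv A s \<in> D (inv\<^bsub>G\<^esub> x)" using D_sinv s x by blast
  have ss': "s \<otimes> sinv A s \<in> D (inv\<^bsub>G\<^esub> x)" and s's: "sinv A s \<otimes> s \<in> D (inv\<^bsub>G\<^esub> x)"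
    using D_mult_right[OF _ _ s] D_mult_right[OF _ _ s'] x sA by auto
  have "\<theta> x s \<otimes> \<theta> x (sinv A s) \<otimes> \<theta> x s = \<theta> x (s \<otimes> sinv A s \<otimes> s)"
    using theta_mult[OF x ss' s] theta_mult[OF x s s'] by simp
  moreover have "\<theta> x (sinv A s) \<otimes> \<theta> x s \<otimes> \<theta> x (sinv A s) = \<theta> x (sinv A s \<otimes> s \<otimes> sinv A s)"
    using theta_mult[OF x s's s'] theta_mult[OF x s' s] by simp
  ultimately have "\<theta> x s \<otimes> \<theta> x (sinv A s) \<otimes> \<theta> x s = \<theta> x s"
    and "\<theta> x (sinv A s) \<otimes> \<theta> x s \<otimes> \<theta> x (sinv A s) = \<theta> x (sinv A s)"
    using sA by (simp_all add: sinv_inverse)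
  then show ?thesis
    using sinv_eqI theta_closed x s s' D_carrier by (metis G.inv_closed)
qed

lemma theta_mult_sinv:
  "x \<in> carrier G \<Longrightarrow> s \<in> D (inv\<^bsub>G\<^esub> x) \<Longrightarrow> \<theta> x (s \<otimes> sinv A s) = \<theta> x s \<otimes> sinv A (\<theta> x s)"
  using theta_mult D_sinv theta_sinv by (metis G.inv_closed)

lemma theta_idem: "x \<in> carrier G \<Longrightarrow> e \<in> D (inv\<^bsub>G\<^esub> x) \<inter> idems A \<Longrightarrow> \<theta> x e \<in> idems A"
  using theta_mult[of x e e] theta_closed[of x e] D_carrier[of x] unfolding idems_def by auto

text \<open>\<open>\<theta> x\<close> is only multiplicative on \<open>D (inv x)\<close>; the second factor is moved into that ideal by
  inserting the idempotent \<open>sinv A s \<otimes> s\<close>.\<close>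

lemma theta_mult_split:
  assumes x: "x \<in> carrier G" and s: "s \<in> D (inv\<^bsub>G\<^esub> x)" and c: "c \<in> carrier A"
  shows "\<theta> x (s \<otimes> c) = \<theta> x s \<otimes> \<theta> x (sinv A s \<otimes> s \<otimes> c)"
proof -
  have sA: "s \<in> carrier A" using D_carrier s x by blast
  have "s \<otimes> c = s \<otimes> (sinv A s \<otimes> s \<otimes> c)" using sA c by (simp add: mult_assoc sinv_cancel)
  moreover have "sinv A s \<otimes> s \<otimes> c \<in> D (inv\<^bsub>G\<^esub> x)"
    using D_mult_right D_mult_left D_sinv s sA c x by (metis G.inv_closed)
  ultimately show ?thesis using theta_mult[OF x s] by simp
qed

lemma inv_mult_identities:
  assumes "x \<in> carrier G" "y \<in> carrier G"
  shows "inv\<^bsub>G\<^esub> (x \<otimes>\<^bsub>G\<^esub> y) = inv\<^bsub>G\<^esub> y \<otimes>\<^bsub>G\<^esub> inv\<^bsub>G\<^esub> x"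
    and "x \<otimes>\<^bsub>G\<^esub> y \<otimes>\<^bsub>G\<^esub> inv\<^bsub>G\<^esub> y = x"
    and "y \<otimes>\<^bsub>G\<^esub> (inv\<^bsub>G\<^esub> y \<otimes>\<^bsub>G\<^esub> inv\<^bsub>G\<^esub> x) = inv\<^bsub>G\<^esub> x"
  using assms by (simp_all add: G.inv_mult_group G.m_assoc flip: G.m_assoc[of y "inv\<^bsub>G\<^esub> y"])

lemma theta_twist_domain:
  assumes "x \<in> carrier G" "y \<in> carrier G" "t \<in> D (inv\<^bsub>G\<^esub> x) \<inter> D y"
  shows "\<theta> x t \<in> D x \<inter> D (x \<otimes>\<^bsub>G\<^esub> y)"
proof -
  have "\<theta> x t \<in> \<theta> x ` (D (inv\<^bsub>G\<^esub> x) \<inter> D y)" using assms(3) by (rule imageI)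
  then show ?thesis using theta_image_Int[OF assms(1,2)] by simp
qed

lemma twist_theta_theta:
  assumes x: "x \<in> carrier G" and y: "y \<in> carrier G"
    and h: "h \<in> D (inv\<^bsub>G\<^esub> y) \<inter> D (inv\<^bsub>G\<^esub> y \<otimes>\<^bsub>G\<^esub> inv\<^bsub>G\<^esub> x)"
  shows "\<theta> x (\<theta> y h) \<in> D x \<inter> D (x \<otimes>\<^bsub>G\<^esub> y)"
    and "L x y (\<theta> (x \<otimes>\<^bsub>G\<^esub> y) h) = R x y (\<theta> x (\<theta> y h))"
proof -
  note T = twist_sg_ideal[OF x G.m_closed[OF x y]] and w = twist_unit_multiplier[OF x y]
  have "\<theta> (x \<otimes>\<^bsub>G\<^esub> y) h \<in> D (x \<otimes>\<^bsub>G\<^esub> y) \<inter> D x"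
    using theta_twist_domain[of "x \<otimes>\<^bsub>G\<^esub> y" "inv\<^bsub>G\<^esub> y" h] h x y by (simp add: inv_mult_identities)
  then have "L x y (\<theta> (x \<otimes>\<^bsub>G\<^esub> y) h) \<in> D x \<inter> D (x \<otimes>\<^bsub>G\<^esub> y)"
    using multiplier_closed(1)[OF T w] by blast
  then show "\<theta> x (\<theta> y h) \<in> D x \<inter> D (x \<otimes>\<^bsub>G\<^esub> y)"
    and "L x y (\<theta> (x \<otimes>\<^bsub>G\<^esub> y) h) = R x y (\<theta> x (\<theta> y h))"
    using theta_theta[OF x y h] multiplier_rinv[OF T w] by simp_all
qed

text \<open>Condition (iv), \<open>\<theta>\<^sub>x \<theta>\<^sub>y = w\<^sub>x\<^sub>,\<^sub>y\<^sup>-\<^sup>1 \<theta>\<^sub>x\<^sub>y w\<^sub>x\<^sub>,\<^sub>y\<close>, combined with the multiplier law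
  \<open>s (w t) = (s w) t\<close>.\<close>

lemma twist_mult_theta:
  assumes x: "x \<in> carrier G" and y: "y \<in> carrier G" and t: "t \<in> D (inv\<^bsub>G\<^esub> x) \<inter> D y"
    and h: "h \<in> D (inv\<^bsub>G\<^esub> y) \<inter> D (inv\<^bsub>G\<^esub> y \<otimes>\<^bsub>G\<^esub> inv\<^bsub>G\<^esub> x)"
  shows "R x y (\<theta> x t) \<otimes> \<theta> (x \<otimes>\<^bsub>G\<^esub> y) h = R x y (\<theta> x (t \<otimes> \<theta> y h))"
proof -
  note T = twist_sg_ideal[OF x G.m_closed[OF x y]] and w = twist_unit_multiplier[OF x y]
  have t': "\<theta> x t \<in> D x \<inter> D (x \<otimes>\<^bsub>G\<^esub> y)" using theta_twist_domain x y t by blast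
  have h': "\<theta> (x \<otimes>\<^bsub>G\<^esub> y) h \<in> D x \<inter> D (x \<otimes>\<^bsub>G\<^esub> y)"
    using theta_twist_domain[of "x \<otimes>\<^bsub>G\<^esub> y" "inv\<^bsub>G\<^esub> y" h] h x y by (auto simp: inv_mult_identities)
  have hy: "\<theta> y h \<in> D (inv\<^bsub>G\<^esub> x)"
    using theta_twist_domain[of y "inv\<^bsub>G\<^esub> y \<otimes>\<^bsub>G\<^esub> inv\<^bsub>G\<^esub> x" h] h x y by (simp add: inv_mult_identities)
  have "R x y (\<theta> x t) \<otimes> \<theta> (x \<otimes>\<^bsub>G\<^esub> y) h = \<theta> x t \<otimes> L x y (\<theta> (x \<otimes>\<^bsub>G\<^esub> y) h)"
    using multiplier_mult(3)[OF T w t' h'] by simp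
  also have "\<dots> = \<theta> x t \<otimes> R x y (\<theta> x (\<theta> y h))"
    using twist_theta_theta(2)[OF x y h] by simp
  also have "\<dots> = R x y (\<theta> x t \<otimes> \<theta> x (\<theta> y h))"
    using multiplier_mult_left[OF T w _ twist_theta_theta(1)[OF x y h]] t' D_carrier[OF x] by simp
  also have "\<theta> x t \<otimes> \<theta> x (\<theta> y h) = \<theta> x (t \<otimes> \<theta> y h)"
    using theta_mult[OF x _ hy] t by simp
  finally show ?thesis .
qed

lemma twist_theta_inv_mult:
  assumes x: "x \<in> carrier G" and y: "y \<in> carrier G" and t: "t \<in> D (inv\<^bsub>G\<^esub> x) \<inter> D y"
    and c: "c \<in> carrier A"
  defines "q \<equiv> \<theta>' (x \<otimes>\<^bsub>G\<^esub> y) (R x y (\<theta> x t))"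
  shows "sinv A q \<otimes> q \<in> D (inv\<^bsub>G\<^esub> y) \<inter> idems A"
    and "t \<otimes> \<theta> y (sinv A q \<otimes> q) = t"
    and "\<theta> (x \<otimes>\<^bsub>G\<^esub> y) (q \<otimes> c) = R x y (\<theta> x (t \<otimes> \<theta> y (sinv A q \<otimes> q \<otimes> c)))"
proof -
  note T = twist_sg_ideal[OF x G.m_closed[OF x y]] and w = twist_unit_multiplier[OF x y]
  have xy: "x \<otimes>\<^bsub>G\<^esub> y \<in> carrier G" using x y by simp
  define p where "p = R x y (\<theta> x t)"
  have t': "\<theta> x t \<in> D x \<inter> D (x \<otimes>\<^bsub>G\<^esub> y)" using theta_twist_domain x y t by blast
  have p: "p \<in> D x \<inter> D (x \<otimes>\<^bsub>G\<^esub> y)" unfolding p_def using multiplier_closed(2)[OF T w t'] .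
  have pA: "p \<in> carrier A" using p D_carrier x by blast
  have "p \<in> \<theta> (x \<otimes>\<^bsub>G\<^esub> y) ` (D (inv\<^bsub>G\<^esub> (x \<otimes>\<^bsub>G\<^esub> y)) \<inter> D (inv\<^bsub>G\<^esub> y))"
    using theta_image_Int[OF xy, of "inv\<^bsub>G\<^esub> y"] p x y by (auto simp: inv_mult_identities)
  then have q: "q \<in> D (inv\<^bsub>G\<^esub> y \<otimes>\<^bsub>G\<^esub> inv\<^bsub>G\<^esub> x) \<inter> D (inv\<^bsub>G\<^esub> y)" and pq: "\<theta> (x \<otimes>\<^bsub>G\<^esub> y) q = p"
    unfolding q_def p_def[symmetric] using theta_inv_theta[OF xy] x y
    by (auto simp: inv_mult_identities)
  have qA: "q \<in> carrier A" using q D_carrier y by blast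
  have qxy: "q \<in> D (inv\<^bsub>G\<^esub> (x \<otimes>\<^bsub>G\<^esub> y))" using q x y by (simp add: inv_mult_identities)
  define g where "g = sinv A q \<otimes> q"
  have g_dom: "g \<in> D (inv\<^bsub>G\<^esub> y) \<inter> D (inv\<^bsub>G\<^esub> y \<otimes>\<^bsub>G\<^esub> inv\<^bsub>G\<^esub> x)"
    unfolding g_def using q qA D_mult_left x y by auto
  show "g \<in> D (inv\<^bsub>G\<^esub> y) \<inter> idems A"
    using g_dom qA unfolding g_def by (simp add: sinv_mult_idem)
  have "\<theta> (x \<otimes>\<^bsub>G\<^esub> y) g = sinv A p \<otimes> p"
    unfolding g_def using theta_mult[OF xy D_sinv[OF _ qxy] qxy] theta_sinv[OF xy qxy] pq xy by simp
  then have "p = R x y (\<theta> x (t \<otimes> \<theta> y g))"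
    using twist_mult_theta[OF x y t g_dom] pA unfolding p_def by (simp add: sinv_cancel)
  moreover have "t \<otimes> \<theta> y g \<in> D (inv\<^bsub>G\<^esub> x) \<inter> D y"
  proof -
    have "\<theta> y g \<in> D y \<inter> D (inv\<^bsub>G\<^esub> x)"
      using theta_twist_domain[of y "inv\<^bsub>G\<^esub> y \<otimes>\<^bsub>G\<^esub> inv\<^bsub>G\<^esub> x" g] g_dom x y by (simp add: inv_mult_identities)
    then show ?thesis
      using t D_mult_left D_mult_right D_carrier x y by (meson G.inv_closed IntD1 IntD2 IntI)
  qed
  ultimately have "\<theta> x (t \<otimes> \<theta> y g) = \<theta> x t"
    using multiplier_rinv(3)[OF T w] theta_twist_domain[OF x y] t' unfolding p_def by metis
  then show "t \<otimes> \<theta> y g = t"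
    using theta_inv_theta[OF x] t \<open>t \<otimes> \<theta> y g \<in> D (inv\<^bsub>G\<^esub> x) \<inter> D y\<close> by (metis IntD1)
  have gc: "g \<otimes> c \<in> D (inv\<^bsub>G\<^esub> y) \<inter> D (inv\<^bsub>G\<^esub> y \<otimes>\<^bsub>G\<^esub> inv\<^bsub>G\<^esub> x)"
    using g_dom c D_mult_right x y by auto
  have "\<theta> (x \<otimes>\<^bsub>G\<^esub> y) (q \<otimes> c) = p \<otimes> \<theta> (x \<otimes>\<^bsub>G\<^esub> y) (g \<otimes> c)"
    using theta_mult_split[OF xy qxy c] pq unfolding g_def by simp
  also have "\<dots> = R x y (\<theta> x (t \<otimes> \<theta> y (g \<otimes> c)))"
    unfolding p_def by (rule twist_mult_theta[OF x y t gc])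
  finally show "\<theta> (x \<otimes>\<^bsub>G\<^esub> y) (q \<otimes> c) = R x y (\<theta> x (t \<otimes> \<theta> y (g \<otimes> c)))" .
qed

lemma theta_mult_idem_absorb:
  assumes y: "y \<in> carrier G" and b: "b \<in> D y" and g: "g \<in> D (inv\<^bsub>G\<^esub> y) \<inter> idems A"
    and s: "s \<in> carrier A" and c: "c \<in> carrier A"
    and absorb: "s \<otimes> b \<otimes> \<theta> y g = s \<otimes> b"
  shows "s \<otimes> b \<otimes> \<theta> y (g \<otimes> c) = s \<otimes> \<theta> y (\<theta>' y b \<otimes> c)"
proof -
  define b' where "b' = \<theta>' y b"
  have y': "inv\<^bsub>G\<^esub> y \<in> carrier G" using y by simp
  have b': "b' \<in> D (inv\<^bsub>G\<^esub> y)" and bb': "\<theta> y b' = b"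
    unfolding b'_def using theta_inv_closed theta_theta_inv y b by auto
  have gA: "g \<in> carrier A" and b'A: "b' \<in> carrier A" and bA: "b \<in> carrier A"
    using g b b' D_carrier y y' by (auto simp: idems_def)
  define e where "e = \<theta> y g"
  have e: "e \<in> idems A" unfolding e_def using theta_idem y g by blast
  have eA: "e \<in> carrier A" using e by (rule idems_carrier)
  define v where "v = \<theta> y (sinv A b' \<otimes> b' \<otimes> c)"
  have gD: "g \<in> D (inv\<^bsub>G\<^esub> y)" using g by blast
  have gc: "g \<otimes> c \<in> D (inv\<^bsub>G\<^esub> y)" and b'c: "b' \<otimes> c \<in> D (inv\<^bsub>G\<^esub> y)"
    using D_mult_right[OF y' c] gD b' by auto
  have "sinv A b' \<otimes> b' \<otimes> c \<in> D (inv\<^bsub>G\<^esub> y)"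
    using D_mult_right[OF y' c] D_mult_right[OF y' b'A D_sinv[OF y' b']] by blast
  then have vA: "v \<in> carrier A"
    unfolding v_def using theta_closed D_carrier y by blast
  have u: "\<theta> y (b' \<otimes> c) = b \<otimes> v"
    unfolding v_def using theta_mult_split[OF y b' c] bb' by simp
  have "b \<otimes> \<theta> y (g \<otimes> c) = \<theta> y (b' \<otimes> (g \<otimes> c))"
    using theta_mult[OF y b' gc] bb' by simp
  also have "b' \<otimes> (g \<otimes> c) = g \<otimes> (b' \<otimes> c)"
    using idem_central[of g b'] g b'A gA c by (simp flip: mult_assoc)
  also have "\<theta> y (g \<otimes> (b' \<otimes> c)) = e \<otimes> \<theta> y (b' \<otimes> c)"
    unfolding e_def using theta_mult[OF y gD b'c] .
  finally have "b \<otimes> \<theta> y (g \<otimes> c) = e \<otimes> \<theta> y (b' \<otimes> c)" .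
  moreover have "\<theta> y (g \<otimes> c) \<in> carrier A"
    using theta_closed[OF y gc] D_carrier y by blast
  ultimately have "s \<otimes> b \<otimes> \<theta> y (g \<otimes> c) = s \<otimes> (e \<otimes> (b \<otimes> v))"
    using u s bA by (simp add: mult_assoc)
  also have "\<dots> = s \<otimes> (e \<otimes> b) \<otimes> v"
    using s bA eA vA by (simp add: mult_assoc)
  also have "\<dots> = s \<otimes> b \<otimes> e \<otimes> v"
    using idem_central[OF e bA] s bA eA by (simp add: mult_assoc)
  also have "\<dots> = s \<otimes> \<theta> y (b' \<otimes> c)"
    using absorb u s bA vA unfolding e_def by (simp add: mult_assoc)
  finally show ?thesis unfolding b'_def .
qed

abbreviation U where "U \<equiv> crossed_product G A D \<theta> w"
abbreviation S where "S \<equiv> idem_crossed_product G A D \<theta>"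

lemma crossed_product_carrier: "carrier U = {(a, x). x \<in> carrier G \<and> a \<in> D x}"
  unfolding crossed_product_def by simp

lemma crossed_product_mult: "(a, x) \<otimes>\<^bsub>U\<^esub> (b, y) = (R x y (\<theta> x (\<theta>' x a \<otimes> b)), x \<otimes>\<^bsub>G\<^esub> y)"
  unfolding crossed_product_def by simp

lemma idem_crossed_product_carrier: "carrier S = {(e, x). x \<in> carrier G \<and> e \<in> D x \<inter> idems A}"
  unfolding idem_crossed_product_def by simp

lemma idem_crossed_product_mult: "(e, x) \<otimes>\<^bsub>S\<^esub> (f, y) = (\<theta> x (\<theta>' x e \<otimes> f), x \<otimes>\<^bsub>G\<^esub> y)"
  unfolding idem_crossed_product_def by simp

lemma theta_inv_mult_domain:
  "x \<in> carrier G \<Longrightarrow> y \<in> carrier G \<Longrightarrow> a \<in> D x \<Longrightarrow> b \<in> D y \<Longrightarrow> \<theta>' x a \<otimes> b \<in> D (inv\<^bsub>G\<^esub> x) \<inter> D y"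
  using D_mult_left D_mult_right D_carrier theta_inv_closed by (meson G.inv_closed IntI)

lemma crossed_product_mult_domain:
  assumes "x \<in> carrier G" "y \<in> carrier G" "a \<in> D x" "b \<in> D y"
  shows "R x y (\<theta> x (\<theta>' x a \<otimes> b)) \<in> D x \<inter> D (x \<otimes>\<^bsub>G\<^esub> y)"
  using multiplier_closed(2)[OF twist_sg_ideal twist_unit_multiplier]
    theta_twist_domain theta_inv_mult_domain assms by simp

lemma crossed_product_mult_closed:
  "u \<in> carrier U \<Longrightarrow> v \<in> carrier U \<Longrightarrow> u \<otimes>\<^bsub>U\<^esub> v \<in> carrier U"
  using crossed_product_mult_domain by (auto simp: crossed_product_carrier crossed_product_mult)

lemma crossed_product_assoc_component:
  assumes x: "x \<in> carrier G" and y: "y \<in> carrier G" and z: "z \<in> carrier G"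
    and a: "a \<in> D x" and b: "b \<in> D y" and c: "c \<in> D z"
  shows "R (x \<otimes>\<^bsub>G\<^esub> y) z (\<theta> (x \<otimes>\<^bsub>G\<^esub> y) (\<theta>' (x \<otimes>\<^bsub>G\<^esub> y) (R x y (\<theta> x (\<theta>' x a \<otimes> b))) \<otimes> c))
       = R x (y \<otimes>\<^bsub>G\<^esub> z) (\<theta> x (\<theta>' x a \<otimes> R y z (\<theta> y (\<theta>' y b \<otimes> c))))"
proof -
  define a' where "a' = \<theta>' x a"
  define t where "t = a' \<otimes> b"
  define q where "q = \<theta>' (x \<otimes>\<^bsub>G\<^esub> y) (R x y (\<theta> x t))"
  define u where "u = \<theta> y (\<theta>' y b \<otimes> c)"
  have a': "a' \<in> D (inv\<^bsub>G\<^esub> x)" unfolding a'_def using theta_inv_closed x a .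
  have a'A: "a' \<in> carrier A" using D_carrier[OF G.inv_closed[OF x] a'] .
  have t: "t \<in> D (inv\<^bsub>G\<^esub> x) \<inter> D y" unfolding t_def a'_def using theta_inv_mult_domain x y a b .
  have cA: "c \<in> carrier A" using D_carrier z c .
  have u: "u \<in> D y \<inter> D (y \<otimes>\<^bsub>G\<^esub> z)"
    unfolding u_def using theta_twist_domain theta_inv_mult_domain y z b c by simp
  have bA: "b \<in> carrier A" using D_carrier y b .
  note idem = twist_theta_inv_mult[OF x y t cA, folded q_def]
  have "\<theta> (x \<otimes>\<^bsub>G\<^esub> y) (q \<otimes> c) = R x y (\<theta> x (t \<otimes> \<theta> y (sinv A q \<otimes> q \<otimes> c)))"
    by (fact idem(3))
  also have "t \<otimes> \<theta> y (sinv A q \<otimes> q \<otimes> c) = a' \<otimes> u"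
    unfolding t_def u_def using theta_mult_idem_absorb[OF y b idem(1) a'A cA] idem(2) a'A cA
    by (simp add: t_def mult_assoc)
  finally have lhs: "\<theta> (x \<otimes>\<^bsub>G\<^esub> y) (q \<otimes> c) = R x y (\<theta> x (a' \<otimes> u))" .
  have "a' \<otimes> R y z u = R y z (a' \<otimes> u)"
    using multiplier_mult_left[OF twist_sg_ideal twist_unit_multiplier a'A u] y z by simp
  moreover have "a' \<otimes> u \<in> D (inv\<^bsub>G\<^esub> x) \<inter> D y \<inter> D (y \<otimes>\<^bsub>G\<^esub> z)"
    using D_mult_left D_mult_right a' a'A u D_carrier x y z by (meson G.inv_closed G.m_closed IntI IntD1 IntD2)
  ultimately show ?thesis
    using twist_cocycle[OF x y z] lhs unfolding q_def t_def a'_def u_def by simp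
qed

lemma crossed_product_assoc:
  "u \<in> carrier U \<Longrightarrow> v \<in> carrier U \<Longrightarrow> t \<in> carrier U \<Longrightarrow>
    u \<otimes>\<^bsub>U\<^esub> v \<otimes>\<^bsub>U\<^esub> t = u \<otimes>\<^bsub>U\<^esub> (v \<otimes>\<^bsub>U\<^esub> t)"
  using crossed_product_assoc_component
  by (auto simp: crossed_product_carrier crossed_product_mult G.m_assoc)

lemma crossed_product_sgrp: "sgrp U"
  unfolding sgrp_def using crossed_product_mult_closed crossed_product_assoc by blast

lemma crossed_product_one_mult:
  "y \<in> carrier G \<Longrightarrow> a \<in> carrier A \<Longrightarrow> b \<in> D y \<Longrightarrow> (a, \<one>\<^bsub>G\<^esub>) \<otimes>\<^bsub>U\<^esub> (b, y) = (a \<otimes> b, y)"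
  using D_mult_left[of y a b] D_carrier[of y "a \<otimes> b"] twist_one_left[of y "a \<otimes> b"]
  by (simp add: crossed_product_mult theta_inv_one theta_one D_one)

lemma crossed_product_idems: "u \<in> idems U \<longleftrightarrow> (\<exists>e. u = (e, \<one>\<^bsub>G\<^esub>) \<and> e \<in> idems A)"
proof
  assume u: "u \<in> idems U"
  then obtain e x where ex: "u = (e, x)" "x \<in> carrier G" "e \<in> D x"
    unfolding idems_def crossed_product_carrier by auto
  have "x \<otimes>\<^bsub>G\<^esub> x = x" using u ex unfolding idems_def by (simp add: crossed_product_mult)
  then have x: "x = \<one>\<^bsub>G\<^esub>" using ex G.r_cancel_one by blast
  then have "e \<otimes> e = e"
    using u ex crossed_product_one_mult[of "\<one>\<^bsub>G\<^esub>" e e] D_one unfolding idems_def by simp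
  then show "\<exists>e. u = (e, \<one>\<^bsub>G\<^esub>) \<and> e \<in> idems A" using ex x D_one unfolding idems_def by auto
next
  assume "\<exists>e. u = (e, \<one>\<^bsub>G\<^esub>) \<and> e \<in> idems A"
  then show "u \<in> idems U"
    using crossed_product_one_mult[of "\<one>\<^bsub>G\<^esub>"] D_one unfolding idems_def crossed_product_carrier by auto
qed

text \<open>An inverse of \<open>(a, x)\<close> is \<open>(sinv A a' \<otimes> \<theta>' x t, inv x)\<close>, where \<open>a' = \<theta>' x a\<close> and \<open>t\<close> is the
  preimage of \<open>a \<otimes> sinv A a\<close> under the twist \<open>w x (inv x)\<close>, which acts on \<open>D x \<inter> D \<one> = D x\<close>.\<close>

lemma crossed_product_regular:
  assumes "u \<in> carrier U"
  shows "\<exists>v\<in>carrier U. u \<otimes>\<^bsub>U\<^esub> v \<otimes>\<^bsub>U\<^esub> u = u"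
proof -
  obtain a x where u: "u = (a, x)" and x: "x \<in> carrier G" and a: "a \<in> D x"
    using assms unfolding crossed_product_carrier by auto
  have x': "inv\<^bsub>G\<^esub> x \<in> carrier G" and xx': "x \<otimes>\<^bsub>G\<^esub> inv\<^bsub>G\<^esub> x = \<one>\<^bsub>G\<^esub>" using x by simp_all
  have Dx: "D x \<inter> D (x \<otimes>\<^bsub>G\<^esub> inv\<^bsub>G\<^esub> x) = D x" using xx' D_one D_carrier x by auto
  note T = D_sg_ideal[OF x] and w = twist_unit_multiplier[OF x x', unfolded Dx]
  have aA: "a \<in> carrier A" using D_carrier x a .
  define e where "e = a \<otimes> sinv A a"
  have e: "e \<in> D x" and eA: "e \<in> idems A"
    unfolding e_def using D_mult_right x a aA mult_sinv_idem by auto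
  define t where "t = mult_rinv (D x) (w x (inv\<^bsub>G\<^esub> x)) e"
  have t: "t \<in> D x" and Rt: "R x (inv\<^bsub>G\<^esub> x) t = e"
    unfolding t_def using multiplier_rinv[OF T w e] by auto
  have et: "e \<otimes> t = t"
    unfolding t_def using multiplier_rinv_mult_left[OF T w _ e, of e] eA unfolding idems_def by simp
  define a' where "a' = \<theta>' x a"
  have a': "a' \<in> D (inv\<^bsub>G\<^esub> x)" and a'A: "a' \<in> carrier A"
    unfolding a'_def using theta_inv_closed[OF x a] D_carrier[OF x'] by auto
  have t': "\<theta>' x t \<in> D (inv\<^bsub>G\<^esub> x)" using theta_inv_closed x t .
  have a'a': "a' \<otimes> sinv A a' \<in> D (inv\<^bsub>G\<^esub> x)" using D_mult_right[OF x' _ a'] a'A by simp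
  define b where "b = sinv A a' \<otimes> \<theta>' x t"
  have b: "b \<in> D (inv\<^bsub>G\<^esub> x)" unfolding b_def using D_mult_right[OF x' _ D_sinv[OF x' a']] t' D_carrier[OF x'] by blast
  have "\<theta> x (a' \<otimes> b) = \<theta> x (a' \<otimes> sinv A a') \<otimes> t"
    unfolding b_def using theta_mult[OF x a'a' t'] theta_theta_inv[OF x t] a'A D_carrier[OF x' t']
    by (simp add: mult_assoc)
  also have "\<theta> x (a' \<otimes> sinv A a') = e"
    unfolding e_def a'_def using theta_mult_sinv[OF x a'] theta_theta_inv[OF x a] by (simp add: a'_def)
  finally have "u \<otimes>\<^bsub>U\<^esub> (b, inv\<^bsub>G\<^esub> x) = (e, \<one>\<^bsub>G\<^esub>)"
    using u et Rt xx' unfolding a'_def by (simp add: crossed_product_mult)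
  moreover have "(e, \<one>\<^bsub>G\<^esub>) \<otimes>\<^bsub>U\<^esub> u = u"
    unfolding u e_def using crossed_product_one_mult[OF x _ a] aA by (simp add: sinv_inverse(2))
  moreover have "(b, inv\<^bsub>G\<^esub> x) \<in> carrier U" using b x' by (simp add: crossed_product_carrier)
  ultimately show ?thesis by metis
qed

lemma crossed_product_inverse_semigroup: "inverse_semigroup U"
proof (rule inverse_semigroupI)
  show "regular_sgrp U"
    unfolding regular_sgrp_def using crossed_product_sgrp crossed_product_regular by blast
next
  fix e f assume "e \<in> idems U" "f \<in> idems U"
  then obtain e0 f0 where "e = (e0, \<one>\<^bsub>G\<^esub>)" "f = (f0, \<one>\<^bsub>G\<^esub>)" "e0 \<in> idems A" "f0 \<in> idems A"
    using crossed_product_idems by blast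
  then show "e \<otimes>\<^bsub>U\<^esub> f = f \<otimes>\<^bsub>U\<^esub> e"
    using crossed_product_one_mult[of "\<one>\<^bsub>G\<^esub>"] D_one idem_central idems_carrier by auto
qed

definition idem_proj :: "'a \<times> 'g \<Rightarrow> 'a \<times> 'g" where
  "idem_proj = (\<lambda>(a, x). (a \<otimes> sinv A a, x))"

lemma snd_idem_proj: "snd (idem_proj u) = snd u"
  unfolding idem_proj_def by (simp add: split_def)

lemma idem_proj_closed: "u \<in> carrier U \<Longrightarrow> idem_proj u \<in> carrier S"
  unfolding idem_proj_def using D_mult_right D_carrier mult_sinv_idem
  by (auto simp: crossed_product_carrier idem_crossed_product_carrier)

lemma idem_crossed_product_fixed: "s \<in> carrier S \<Longrightarrow> s \<in> carrier U \<and> idem_proj s = s"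
  unfolding idem_proj_def
  by (auto simp: crossed_product_carrier idem_crossed_product_carrier sinv_idem idems_def)

lemma theta_inv_mult_sinv:
  assumes x: "x \<in> carrier G" and a: "a \<in> D x"
  shows "\<theta>' x (a \<otimes> sinv A a) = \<theta>' x a \<otimes> sinv A (\<theta>' x a)"
proof -
  have x': "inv\<^bsub>G\<^esub> x \<in> carrier G" using x by simp
  have a': "\<theta>' x a \<in> D (inv\<^bsub>G\<^esub> x)" using theta_inv_closed x a .
  then have "\<theta>' x a \<otimes> sinv A (\<theta>' x a) \<in> D (inv\<^bsub>G\<^esub> x)"
    using D_mult_right[OF x'] D_carrier[OF x'] by blast
  then show ?thesis
    using theta_mult_sinv[OF x a'] theta_theta_inv[OF x a] theta_inv_theta[OF x] by metis
qed

lemma idem_proj_mult: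
  assumes "u \<in> carrier U" "v \<in> carrier U"
  shows "idem_proj (u \<otimes>\<^bsub>U\<^esub> v) = idem_proj u \<otimes>\<^bsub>S\<^esub> idem_proj v"
proof -
  obtain a x b y where u: "u = (a, x)" and v: "v = (b, y)" and x: "x \<in> carrier G" and y: "y \<in> carrier G"
    and a: "a \<in> D x" and b: "b \<in> D y"
    using assms unfolding crossed_product_carrier by auto
  define a' where "a' = \<theta>' x a"
  have x': "inv\<^bsub>G\<^esub> x \<in> carrier G" using x by simp
  have a'A: "a' \<in> carrier A" unfolding a'_def using D_carrier[OF x' theta_inv_closed[OF x a]] .
  have bA: "b \<in> carrier A" using D_carrier y b .
  have t: "a' \<otimes> b \<in> D (inv\<^bsub>G\<^esub> x) \<inter> D y" unfolding a'_def using theta_inv_mult_domain x y a b .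
  note T = twist_sg_ideal[OF x G.m_closed[OF x y]] and w = twist_unit_multiplier[OF x y]
  have "R x y (\<theta> x (a' \<otimes> b)) \<otimes> sinv A (R x y (\<theta> x (a' \<otimes> b)))
      = \<theta> x (a' \<otimes> b) \<otimes> sinv A (\<theta> x (a' \<otimes> b))"
    using multiplier_mult_sinv[OF T w theta_twist_domain[OF x y t]] .
  also have "\<dots> = \<theta> x (a' \<otimes> sinv A a' \<otimes> (b \<otimes> sinv A b))"
    using theta_mult_sinv[OF x IntD1[OF t], symmetric] mult_sinv_mult[OF a'A bA] by simp
  finally show ?thesis
    using u v theta_inv_mult_sinv[OF x a] unfolding a'_def idem_proj_def
    by (simp add: crossed_product_mult idem_crossed_product_mult)
qed

lemma idem_proj_epimorphism: "epimorphism U S idem_proj"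
  unfolding epimorphism_def hom_def
  using idem_proj_closed idem_proj_mult idem_crossed_product_fixed by force

lemma idem_crossed_product_idems: "s \<in> idems S \<Longrightarrow> \<exists>e. s = (e, \<one>\<^bsub>G\<^esub>) \<and> e \<in> idems A"
proof -
  assume s: "s \<in> idems S"
  obtain e x where ex: "s = (e, x)" "x \<in> carrier G" "e \<in> D x \<inter> idems A"
    using s unfolding idems_def idem_crossed_product_carrier by auto
  have "x \<otimes>\<^bsub>G\<^esub> x = x" using s ex unfolding idems_def by (simp add: idem_crossed_product_mult)
  then have "x = \<one>\<^bsub>G\<^esub>" using ex G.r_cancel_one by blast
  then show ?thesis using ex by auto
qed

lemma idem_crossed_product_one_mult:
  "e \<in> carrier A \<Longrightarrow> f \<in> carrier A \<Longrightarrow> (e, \<one>\<^bsub>G\<^esub>) \<otimes>\<^bsub>S\<^esub> (f, \<one>\<^bsub>G\<^esub>) = (e \<otimes> f, \<one>\<^bsub>G\<^esub>)"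
  by (simp add: idem_crossed_product_mult theta_inv_one theta_one D_one)

lemma idem_crossed_product_inverse_semigroup: "inverse_semigroup S"
proof (rule inverse_semigroupI)
  show "regular_sgrp S"
    using epimorphism_regular_sgrp[OF _ idem_proj_epimorphism] crossed_product_sgrp crossed_product_regular
    unfolding regular_sgrp_def by blast
next
  fix e f assume "e \<in> idems S" "f \<in> idems S"
  then obtain e0 f0 where "e = (e0, \<one>\<^bsub>G\<^esub>)" "f = (f0, \<one>\<^bsub>G\<^esub>)" "e0 \<in> idems A" "f0 \<in> idems A"
    using idem_crossed_product_idems by blast
  then show "e \<otimes>\<^bsub>S\<^esub> f = f \<otimes>\<^bsub>S\<^esub> e"
    using idem_crossed_product_one_mult idem_central idems_carrier by auto
qed

lemma crossed_product_monomorphism: "monomorphism A U (\<lambda>a. (a, \<one>\<^bsub>G\<^esub>))"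
  unfolding monomorphism_def hom_def
  using crossed_product_one_mult[of "\<one>\<^bsub>G\<^esub>"] D_one by (auto simp: crossed_product_carrier inj_on_def)

lemma crossed_product_group_extension: "group_extension A U G (\<lambda>a. (a, \<one>\<^bsub>G\<^esub>)) snd"
  unfolding group_extension_def
proof (intro conjI)
  have "carrier G \<subseteq> snd ` carrier U"
    using D_nonempty by (force simp: crossed_product_carrier)
  then show "epimorphism U G snd"
    unfolding epimorphism_def hom_def by (auto simp: crossed_product_carrier crossed_product_mult)
  show "(\<lambda>a. (a, \<one>\<^bsub>G\<^esub>)) ` carrier A = {u \<in> carrier U. snd u = \<one>\<^bsub>G\<^esub>}"
    using D_one by (auto simp: crossed_product_carrier)
qed (fact crossed_product_inverse_semigroup group crossed_product_monomorphism)+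

lemma idem_crossed_product_epimorphism: "epimorphism S G snd"
proof -
  have "x \<in> snd ` carrier S" if x: "x \<in> carrier G" for x
  proof -
    obtain a where "a \<in> D x" using D_nonempty x by blast
    then have "idem_proj (a, x) \<in> carrier S" using idem_proj_closed x by (simp add: crossed_product_carrier)
    then show ?thesis unfolding idem_proj_def by force
  qed
  then show ?thesis
    unfolding epimorphism_def hom_def
    by (auto simp: idem_crossed_product_carrier idem_crossed_product_mult)
qed

lemma crossed_product_semigroup_extension: "semigroup_extension A U S (\<lambda>a. (a, \<one>\<^bsub>G\<^esub>)) idem_proj"
  unfolding semigroup_extension_def
proof (intro conjI)
  have "idem_proj u = u" if "u \<in> idems U" for u
  proof -
    obtain e where "u = (e, \<one>\<^bsub>G\<^esub>)" "e \<in> idems A"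
      using crossed_product_idems \<open>u \<in> idems U\<close> by blast
    then show ?thesis unfolding idem_proj_def by (simp add: sinv_idem idems_def)
  qed
  then show "inj_on idem_proj (idems U)" by (metis inj_onI)
  have "(e, \<one>\<^bsub>G\<^esub>) \<in> idems S" if "e \<in> idems A" for e
    using that idem_crossed_product_one_mult D_one unfolding idems_def idem_crossed_product_carrier by auto
  then have "(a, \<one>\<^bsub>G\<^esub>) \<in> carrier U \<and> idem_proj (a, \<one>\<^bsub>G\<^esub>) \<in> idems S" if "a \<in> carrier A" for a
    using that mult_sinv_idem D_one unfolding idem_proj_def by (simp add: crossed_product_carrier)
  moreover have "u \<in> (\<lambda>a. (a, \<one>\<^bsub>G\<^esub>)) ` carrier A"
    if uU: "u \<in> carrier U" and idem: "idem_proj u \<in> idems S" for u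
  proof -
    obtain a x where u: "u = (a, x)" "x \<in> carrier G" "a \<in> D x"
      using uU unfolding crossed_product_carrier by blast
    obtain e where "(a \<otimes> sinv A a, x) = (e, \<one>\<^bsub>G\<^esub>)"
      using idem_crossed_product_idems[OF idem] unfolding u idem_proj_def by auto
    then show ?thesis using u D_one by auto
  qed
  ultimately show "(\<lambda>a. (a, \<one>\<^bsub>G\<^esub>)) ` carrier A = {u \<in> carrier U. idem_proj u \<in> idems S}"
    by blast
qed (fact crossed_product_inverse_semigroup idem_crossed_product_inverse_semigroup
      idem_proj_epimorphism crossed_product_monomorphism)+

end

theorem proposition5p15:
  fixes G :: "('g,'c) monoid_scheme" and A :: "('a,'b) monoid_scheme"
    and D :: "'g \<Rightarrow> 'a set" and \<theta> :: "'g \<Rightarrow> 'a \<Rightarrow> 'a"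
    and w :: "'g \<Rightarrow> 'g \<Rightarrow> ('a \<Rightarrow> 'a) \<times> ('a \<Rightarrow> 'a)"
  assumes "group G"
    and "semilattice_of_groups A"
    and "twisted_partial_action G A D \<theta> w"
  defines "i \<equiv> (\<lambda>a. (a, \<one>\<^bsub>G\<^esub>))"
    and "j \<equiv> (\<lambda>(a::'a, x::'g). x)"
    and "\<pi> \<equiv> (\<lambda>(a, x::'g). (a \<otimes>\<^bsub>A\<^esub> sinv A a, x))"
    and "\<kappa> \<equiv> (\<lambda>(e::'a, x::'g). x)"
  shows "group_extension A (crossed_product G A D \<theta> w) G i j
    \<and> epimorphism (crossed_product G A D \<theta> w) (idem_crossed_product G A D \<theta>) \<pi>
    \<and> epimorphism (idem_crossed_product G A D \<theta>) G \<kappa>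
    \<and> semigroup_extension A (crossed_product G A D \<theta> w) (idem_crossed_product G A D \<theta>) i \<pi>
    \<and> (\<forall>u\<in>carrier (crossed_product G A D \<theta> w). j u = \<kappa> (\<pi> u))"
proof -
  interpret twisted_action A G D \<theta> w
    by (intro twisted_action.intro clifford_semigroup.intro twisted_action_axioms.intro) (fact assms)+
  have "j = snd" and "\<kappa> = snd" unfolding j_def \<kappa>_def by auto
  moreover have "\<pi> = idem_proj" unfolding \<pi>_def idem_proj_def ..
  ultimately show ?thesis
    using crossed_product_group_extension idem_proj_epimorphism idem_crossed_product_epimorphism
      crossed_product_semigroup_extension
    unfolding i_def by (simp add: snd_idem_proj)
qed

end
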